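(* Let $m\ge2$. There exist traceless $m\times m$ real matrices $A$ and $B$ such that, with \[ V_1(x)=Ax,\quad V_2(x)=Bx,\quad V_3(x)=\begin{pmatrix}0\\ \vdots\\ 0\\ 1\end{pmatrix},\quad V_4(x)=\begin{pmatrix}(x^m)^2\\ 0\\ \vdots\\ 0\end{pmatrix},\quad V_5(x)=\begin{pmatrix}x^1x^m\\ x^2x^m\\ \vdots\\ (x^m)^2\end{pmatrix} \] (where $x=(x^1,\ldots,x^m)$ and $V_5(x)=x^m\,x$), the Lie algebra $\mathrm{Lie}(V_1,\ldots,V_5)$ contains all polynomial vector fields on $\mathbb{R}^m$.
   Context: For smooth vector fields $U,V$ on $\mathbb{R}^m$, the Lie bracket is $[U,V](x)=DV(x)U(x)-DU(x)V(x)$, with $DU$ the Jacobian matrix. $\mathrm{Lie}(U_1,\ldots,U_d)$ is the smallest linear space of vector fields containing $U_1,\ldots,U_d$ and closed under Lie brackets. A polynomial vector field is one whose components are polynomials in $x^1,\ldots,x^m$. A traceless matrix is one with trace zero. *)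

theory Defs
  imports "HOL-Analysis.Analysis"
begin

text \<open>Vector fields on R^m are maps real^'n => real^'n; the index type 'n is finite
and linearly ordered, so its least element is coordinate 1 and its greatest is coordinate m.\<close>

type_synonym 'n vfield = "real^'n \<Rightarrow> real^'n"

definition first_idx :: "'n::{finite,linorder}" where
  "first_idx = Min UNIV"

definition last_idx :: "'n::{finite,linorder}" where
  "last_idx = Max UNIV"

definition lie_bracket :: "'n::finite vfield \<Rightarrow> 'n vfield \<Rightarrow> 'n vfield" where
  "lie_bracket U V = (\<lambda>x. frechet_derivative V (at x) (U x) - frechet_derivative U (at x) (V x))"

inductive_set Lie :: "'n::finite vfield set \<Rightarrow> 'n vfield set" for G where
  gen: "U \<in> G \<Longrightarrow> U \<in> Lie G"
| zero: "(\<lambda>x. 0) \<in> Lie G"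
| add: "U \<in> Lie G \<Longrightarrow> V \<in> Lie G \<Longrightarrow> (\<lambda>x. U x + V x) \<in> Lie G"
| scale: "U \<in> Lie G \<Longrightarrow> (\<lambda>x. c *\<^sub>R U x) \<in> Lie G"
| bracket: "U \<in> Lie G \<Longrightarrow> V \<in> Lie G \<Longrightarrow> lie_bracket U V \<in> Lie G"

inductive poly_fun :: "(real^'n::finite \<Rightarrow> real) \<Rightarrow> bool" where
  const: "poly_fun (\<lambda>x. c)"
| coord: "poly_fun (\<lambda>x. x $ i)"
| add: "poly_fun p \<Longrightarrow> poly_fun q \<Longrightarrow> poly_fun (\<lambda>x. p x + q x)"
| mult: "poly_fun p \<Longrightarrow> poly_fun q \<Longrightarrow> poly_fun (\<lambda>x. p x * q x)"

definition poly_vfield :: "'n::finite vfield \<Rightarrow> bool" where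
  "poly_vfield V \<longleftrightarrow> (\<forall>i. poly_fun (\<lambda>x. V x $ i))"

end

theory Submission
  imports Defs "HOL-Library.Multiset"
begin

text \<open>
  Write x^M e_a for the monomial field with exponent multiset M in component a. These fields
  span the polynomial vector fields, and
  [x^M e_a, x^N e_b] = N(a) x^(M+N-a) e_b - M(b) x^(M+N-b) e_a.
  Let A be the nilpotent shift e_j -> e_(j-1) along the coordinate order and B its transpose;
  both are traceless. Since [Ax, e_j] = -A e_j and [Bx, x^j x] = (Bx)_j x, repeated brackets
  with Ax starting from V3 = e_m give all constant fields e_i, and repeated brackets with Bx
  starting from V5 = x^m x give all Euler fields x^p x. Brackets among these and with
  V4 = (x^m)^2 e_1 produce every monomial field of degree at most two. Brackets with quadratic
  fields then raise the degree one step at a time, e.g.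
  [(x^a)^2 e_a, x^N e_a] = (N(a) - 2) x^(N+a) e_a.
\<close>

section \<open>Monomial vector fields and their brackets\<close>

definition monomial :: "'n::finite multiset \<Rightarrow> real^'n \<Rightarrow> real" where
  "monomial M x = (\<Prod>k\<in>UNIV. x$k ^ count M k)"

definition monomial_field :: "'n::finite \<Rightarrow> 'n multiset \<Rightarrow> 'n vfield" where
  "monomial_field a M = (\<lambda>x. axis a (monomial M x))"

lemma monomial_plus: "monomial (M + N) x = monomial M x * monomial N x"
  by (simp add: monomial_def power_add prod.distrib)

lemma monomial_empty [simp]: "monomial {#} x = 1"
  by (simp add: monomial_def)

lemma monomial_add_mset [simp]: "monomial (add_mset a M) x = x$a * monomial M x"
proof -
  have "monomial {#a#} x = x$a"
    by (simp add: monomial_def count_single prod.delta'[of UNIV a] if_distrib[of "power _"] cong: if_cong)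
  then show ?thesis using monomial_plus[of "{#a#}" M] by simp
qed

lemma monomial_field_empty: "monomial_field a {#} = (\<lambda>x. axis a 1)"
  by (simp add: monomial_field_def)

lemma has_derivative_vec_nth [derivative_intros]:
  "(f has_derivative f') F \<Longrightarrow> ((\<lambda>x. f x $ k) has_derivative (\<lambda>h. f' h $ k)) F"
  by (rule bounded_linear.has_derivative[OF bounded_linear_vec_nth])

lemma has_derivative_monomial:
  "(monomial M has_derivative (\<lambda>h. \<Sum>k\<in>UNIV. h$k * (count M k * monomial (M - {#k#}) x))) (at x)"
proof -
  have factor: "((\<lambda>x. x$k ^ count M k) has_derivative
      (\<lambda>h. count M k * h$k * x$k ^ (count M k - 1))) (at x)" for k
    by (auto intro!: derivative_eq_intros)
  have remove: "monomial (M - {#k#}) x = x$k ^ (count M k - 1) * (\<Prod>j\<in>UNIV - {k}. x$j ^ count M j)" for k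
    unfolding monomial_def by (subst prod.remove[of UNIV k]) (auto intro!: prod.cong)
  show ?thesis
    unfolding remove unfolding monomial_def[abs_def]
    by (rule has_derivative_eq_rhs[OF has_derivative_prod[OF factor]]) (simp add: fun_eq_iff mult_ac)
qed

lemma axis_eq_scaleR: "axis a t = t *\<^sub>R axis a (1::real)"
  by (simp add: vec_eq_iff axis_def)

lemma has_derivative_monomial_field:
  "(monomial_field a M has_derivative
     (\<lambda>h. axis a (\<Sum>k\<in>UNIV. h$k * (count M k * monomial (M - {#k#}) x)))) (at x)"
  unfolding monomial_field_def
  by (subst (1 2) axis_eq_scaleR) (intro has_derivative_scaleR_left has_derivative_monomial)

lemma lie_bracket_eq:
  assumes "\<And>x. (U has_derivative U' x) (at x)" and "\<And>x. (V has_derivative V' x) (at x)"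
  shows "lie_bracket U V = (\<lambda>x. V' x (U x) - U' x (V x))"
  unfolding lie_bracket_def
  using frechet_derivative_at[OF assms(1)] frechet_derivative_at[OF assms(2)] by metis

lemma sum_axis_mult: "(\<Sum>k\<in>UNIV. axis a t $ k * c k) = (t::real) * c a"
proof -
  have "(\<Sum>k\<in>UNIV. axis a t $ k * c k) = (\<Sum>k\<in>UNIV. if k = a then t * c k else 0)"
    by (rule sum.cong) (auto simp: axis_def)
  then show ?thesis by simp
qed

lemma scaleR_count_monomial_field_diff:
  "count N a *\<^sub>R monomial_field b (M + (N - {#a#})) x = count N a *\<^sub>R monomial_field b (M + N - {#a#}) x"
proof (cases "a \<in># N")
  case True
  then have "M + (N - {#a#}) = M + N - {#a#}"
    by (metis multiset_diff_union_assoc single_subset_iff)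
  then show ?thesis by simp
next
  case False
  then show ?thesis by (simp add: not_in_iff)
qed

lemma lie_bracket_monomial_fields:
  "lie_bracket (monomial_field a M) (monomial_field b N) =
    (\<lambda>x. count N a *\<^sub>R monomial_field b (M + N - {#a#}) x
        - count M b *\<^sub>R monomial_field a (M + N - {#b#}) x)"
proof -
  have "lie_bracket (monomial_field a M) (monomial_field b N) =
    (\<lambda>x. count N a *\<^sub>R monomial_field b (M + (N - {#a#})) x
        - count M b *\<^sub>R monomial_field a (N + (M - {#b#})) x)"
    unfolding lie_bracket_eq[OF has_derivative_monomial_field has_derivative_monomial_field]
    by (simp add: fun_eq_iff monomial_field_def sum_axis_mult monomial_plus) (simp add: vec_eq_iff axis_def)
  then show ?thesis
    using scaleR_count_monomial_field_diff[of N a _ M] scaleR_count_monomial_field_diff[of M b _ N]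
    by (simp only: add.commute[of N M])
qed

lemma lie_bracket_monomial_fields_same_axis:
  "lie_bracket (monomial_field a M) (monomial_field a N) =
    (\<lambda>x. (real (count N a) - real (count M a)) *\<^sub>R monomial_field a (M + N - {#a#}) x)"
  by (simp add: lie_bracket_monomial_fields scaleR_diff_left)

lemma Lie_diff: "U \<in> Lie G \<Longrightarrow> V \<in> Lie G \<Longrightarrow> (\<lambda>x. U x - V x) \<in> Lie G"
  using Lie.add[OF _ Lie.scale[of V G "-1"], of U] by simp

lemma Lie_sum:
  "finite S \<Longrightarrow> (\<And>j. j \<in> S \<Longrightarrow> F j \<in> Lie G) \<Longrightarrow> (\<lambda>x. \<Sum>j\<in>S. F j x) \<in> Lie G"
proof (induction S rule: finite_induct)
  case empty
  then show ?case by (simp add: Lie.zero)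
next
  case (insert j S)
  then show ?case using Lie.add[of "F j" G "\<lambda>x. \<Sum>j\<in>S. F j x"] by simp
qed

lemma Lie_scaleR_cancel: "(c::real) \<noteq> 0 \<Longrightarrow> (\<lambda>x. c *\<^sub>R U x) \<in> Lie G \<Longrightarrow> U \<in> Lie G"
  using Lie.scale[of "\<lambda>x. c *\<^sub>R U x" G "inverse c"] by simp

lemma Lie_bracket_cancel:
  assumes "U \<in> Lie G" and "V \<in> Lie G" and "lie_bracket U V = (\<lambda>x. c *\<^sub>R W x)" and "c \<noteq> 0"
  shows "W \<in> Lie G"
  using Lie.bracket[OF assms(1,2)] Lie_scaleR_cancel[OF assms(4)] assms(3) by simp

section \<open>Raising the degree\<close>

lemma Lie_monomial_field_same_axis:
  assumes "monomial_field a M \<in> Lie G" and "monomial_field a N \<in> Lie G" and "count M a \<noteq> count N a"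
  shows "monomial_field a (M + N - {#a#}) \<in> Lie G"
  by (rule Lie_bracket_cancel[OF assms(1,2) lie_bracket_monomial_fields_same_axis]) (use assms(3) in simp)

text \<open>Among same-axis brackets of lower degree, (x^a)^3 e_a could only come from
  [(x^a)^2 e_a, (x^a)^2 e_a] = 0, so a second coordinate c is needed.\<close>

lemma Lie_monomial_field_cube:
  assumes "c \<noteq> a" and "monomial_field c {#a#} \<in> Lie G"
    and "monomial_field a {#a,a,c#} \<in> Lie G" and "monomial_field c {#a,a,c#} \<in> Lie G"
  shows "monomial_field a {#a,a,a#} \<in> Lie G"
proof -
  have "lie_bracket (monomial_field c {#a#}) (monomial_field a {#a,a,c#}) =
      (\<lambda>x. monomial_field a {#a,a,a#} x - monomial_field c {#a,a,c#} x)"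
    using assms(1) by (simp add: lie_bracket_monomial_fields add_mset_commute)
  then have "(\<lambda>x. monomial_field a {#a,a,a#} x - monomial_field c {#a,a,c#} x) \<in> Lie G"
    using Lie.bracket[OF assms(2,3)] by simp
  from Lie.add[OF this assms(4)] show ?thesis by simp
qed

lemma Lie_monomial_field_degree_step:
  fixes G :: "'n::finite vfield set"
  assumes card: "CARD('n) \<ge> 2"
    and quadratic: "\<And>a M. size M \<le> 2 \<Longrightarrow> monomial_field a M \<in> Lie G"
    and lower: "\<And>a M. size M = d \<Longrightarrow> monomial_field a M \<in> Lie G"
    and "d \<ge> 2" and size: "size g = Suc d"
  shows "monomial_field a g \<in> Lie G"
proof -
  have square: "monomial_field a g \<in> Lie G" if "a \<in># g" "count g a \<noteq> 3" "size g = Suc d" for a g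
  proof -
    have "monomial_field a ({#a,a#} + (g - {#a#}) - {#a#}) \<in> Lie G"
      using that by (intro Lie_monomial_field_same_axis quadratic lower) (auto simp: size_Diff_submset)
    then show ?thesis using that by (simp add: multiset_eq_iff)
  qed
  have mixed: "monomial_field a g \<in> Lie G" if "j \<noteq> a" "j \<in># g" "count g a \<noteq> 1" for j
  proof -
    have "monomial_field a ({#a,j#} + (g - {#j#}) - {#a#}) \<in> Lie G"
      using that size by (intro Lie_monomial_field_same_axis quadratic lower) (auto simp: size_Diff_submset)
    then show ?thesis using that by (simp add: multiset_eq_iff)
  qed
  consider "a \<in># g" "count g a \<noteq> 3" | j where "j \<noteq> a" "j \<in># g" "count g a \<noteq> 1"
    | "g = {#a,a,a#}"
  proof (cases "a \<in># g \<and> count g a \<noteq> 3")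
    case True
    then show thesis using that(1) by blast
  next
    case not_square: False
    show thesis
    proof (cases "\<exists>j. j \<noteq> a \<and> j \<in># g")
      case True
      then obtain j where "j \<noteq> a" "j \<in># g" by blast
      moreover have "count g a \<noteq> 1" using not_square by (auto simp: not_in_iff)
      ultimately show thesis using that(2) by blast
    next
      case False
      then have g: "g = replicate_mset (count g a) a"
        by (auto simp: multiset_eq_iff not_in_iff)
      then have "count g a = Suc d"
        using size by (metis size_replicate_mset)
      then have "count g a = 3"
        using not_square \<open>d \<ge> 2\<close> by (auto simp: not_in_iff)
      then show thesis using that(3) g by (simp add: numeral_3_eq_3)
    qed
  qed
  then show ?thesis
  proof cases
    case 1
    then show ?thesis using square size by blast
  next
    case 2
    then show ?thesis using mixed by blast
  next
    case 3
    obtain c :: 'n where "c \<noteq> a"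
      using card by (metis card_le_Suc0_iff_eq finite not_less_eq_eq numeral_2_eq_2 UNIV_I)
    have "monomial_field a {#a,a,a#} \<in> Lie G"
      using \<open>c \<noteq> a\<close> 3 size
      by (intro Lie_monomial_field_cube[of c a] square quadratic) auto
    then show ?thesis using 3 by simp
  qed
qed

lemma Lie_monomial_fields_from_quadratic:
  fixes G :: "'n::finite vfield set"
  assumes "CARD('n) \<ge> 2" and quadratic: "\<And>a M. size M \<le> 2 \<Longrightarrow> monomial_field a M \<in> Lie G"
  shows "monomial_field a M \<in> Lie G"
proof (induction "size M" arbitrary: a M)
  case 0
  then show ?case using quadratic by simp
next
  case (Suc d)
  show ?case
  proof (cases "d \<ge> 2")
    case True
    have "monomial_field b N \<in> Lie G" if "size N = d" for b N
      using Suc.hyps(1) that by simp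
    from Lie_monomial_field_degree_step[OF assms this True] Suc.hyps(2) show ?thesis by simp
  next
    case False
    with Suc show ?thesis using quadratic by simp
  qed
qed

section \<open>Fields of degree at most two\<close>

lemma has_derivative_euler_field:
  "((\<lambda>x. x$p *\<^sub>R x) has_derivative (\<lambda>h. h$p *\<^sub>R x + x$p *\<^sub>R h)) (at x)"
  by (auto intro!: derivative_eq_intros)

lemma lie_bracket_constant_euler_field:
  "i \<noteq> p \<Longrightarrow> lie_bracket (monomial_field i {#}) (\<lambda>x. x$p *\<^sub>R x) = monomial_field i {#p#}"
  by (subst lie_bracket_eq[OF has_derivative_monomial_field has_derivative_euler_field])
     (simp add: fun_eq_iff monomial_field_def vec_eq_iff axis_def)

lemma euler_field_split:
  fixes k :: "'n::finite"
  shows "(\<lambda>x. x$k *\<^sub>R x) =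
    (\<lambda>x. monomial_field k {#k,k#} x + (\<Sum>j\<in>UNIV-{k}. monomial_field j {#k,j#} x))"
proof -
  have "x$k *\<^sub>R x = (\<Sum>j\<in>UNIV. monomial_field j {#k,j#} x)" for x :: "real^'n"
  proof -
    have "(\<Sum>j\<in>UNIV. monomial_field j {#k,j#} x) $ i = (\<Sum>j\<in>UNIV. if j = i then x$k * x$j else 0)" for i
      unfolding sum_component by (rule sum.cong) (auto simp: monomial_field_def axis_def)
    then show ?thesis by (simp add: vec_eq_iff)
  qed
  then show ?thesis by (simp add: fun_eq_iff sum.remove[of UNIV k])
qed

lemma Lie_sum_components:
  assumes "finite S" and sum: "(\<lambda>x. w x + (\<Sum>j\<in>S. u j x)) \<in> Lie G"
    and differences: "\<And>j. j \<in> S \<Longrightarrow> (\<lambda>x. 2 *\<^sub>R u j x - c j *\<^sub>R w x) \<in> Lie G"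
    and "\<And>j. j \<in> S \<Longrightarrow> (c j::real) \<ge> 0"
  shows "w \<in> Lie G" and "\<And>j. j \<in> S \<Longrightarrow> u j \<in> Lie G"
proof -
  have "(\<lambda>x. \<Sum>j\<in>S. (1/2) *\<^sub>R (2 *\<^sub>R u j x - c j *\<^sub>R w x)) \<in> Lie G"
    using differences by (intro Lie_sum \<open>finite S\<close> Lie.scale)
  from Lie_diff[OF sum this]
  have "(\<lambda>x. (1 + (\<Sum>j\<in>S. c j) / 2) *\<^sub>R w x) \<in> Lie G"
    by (simp add: scaleR_diff_right sum_subtractf scaleR_sum_left[symmetric] algebra_simps
        sum_divide_distrib)
  moreover have "1 + (\<Sum>j\<in>S. c j) / 2 \<noteq> 0"
    using sum_nonneg[of S c] assms(4) by fastforce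
  ultimately show w: "w \<in> Lie G" using Lie_scaleR_cancel by blast
  fix j assume "j \<in> S"
  have "(\<lambda>x. (2 *\<^sub>R u j x - c j *\<^sub>R w x) + c j *\<^sub>R w x) \<in> Lie G"
    using differences[OF \<open>j \<in> S\<close>] w by (intro Lie.add Lie.scale)
  then show "u j \<in> Lie G" using Lie_scaleR_cancel[of 2] by simp
qed

lemma multiset_size_le_2_cases:
  assumes "size M \<le> 2"
  obtains "M = {#}" | p where "M = {#p#}" | p q where "M = {#p,q#}"
proof (cases M)
  case empty
  then show thesis by (rule that(1))
next
  case (add p N)
  note M = this
  show thesis
  proof (cases N)
    case empty
    then show thesis using that(2) M by simp
  next
    case (add q K)
    then have "K = {#}" using assms M by simp
    then show thesis using that(3) M add by simp
  qed
qed

text \<open>Here f and l play the roles of the first and last coordinate. Brackets with the linear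
  fields x^p e_i move the quadratic generator (x^l)^2 e_f around; the Euler fields x^k x
  supply the diagonal components x^k x^j e_j.\<close>

locale quadratic_generation =
  fixes G :: "'n::finite vfield set" and f l :: 'n
  assumes f_ne_l: "f \<noteq> l"
    and constant_fields: "\<And>i. monomial_field i {#} \<in> Lie G"
    and euler_fields: "\<And>p. (\<lambda>x. x$p *\<^sub>R x) \<in> Lie G"
    and square_field: "monomial_field f {#l,l#} \<in> Lie G"
begin

lemma off_diagonal_linear:
  assumes "i \<noteq> p" shows "monomial_field i {#p#} \<in> Lie G"
  using Lie.bracket[OF constant_fields euler_fields, of i p] lie_bracket_constant_euler_field[OF assms]
  by simp

lemma square_of_l: "i \<noteq> l \<Longrightarrow> monomial_field i {#l,l#} \<in> Lie G"
proof (cases "i = f")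
  case True
  then show ?thesis using square_field by simp
next
  case False
  assume "i \<noteq> l"
  show ?thesis
    by (rule Lie_bracket_cancel[OF off_diagonal_linear[OF False] square_field, where c="-1"])
       (use False \<open>i \<noteq> l\<close> in \<open>simp_all add: lie_bracket_monomial_fields fun_eq_iff\<close>)
qed

lemma quadratic_not_l:
  assumes "i \<noteq> l" and "a \<noteq> i" and "b \<noteq> i"
  shows "monomial_field i {#a,b#} \<in> Lie G"
proof -
  have with_l: "monomial_field i {#l,b#} \<in> Lie G" if "b \<noteq> l" "b \<noteq> i" for b
    by (rule Lie_bracket_cancel[OF off_diagonal_linear[of l b] square_of_l[OF \<open>i \<noteq> l\<close>], where c=2])
       (use that in \<open>auto simp: lie_bracket_monomial_fields fun_eq_iff add_mset_commute\<close>)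
  have without_l: "monomial_field i {#a,b#} \<in> Lie G"
    if "a \<noteq> l" "a \<noteq> i" "b \<noteq> l" "b \<noteq> i" for a b
    by (rule Lie_bracket_cancel[OF off_diagonal_linear[of l a] with_l[of b], where c=1])
       (use that in \<open>auto simp: lie_bracket_monomial_fields fun_eq_iff add_mset_commute\<close>)
  show ?thesis
    using assms square_of_l with_l without_l
    by (cases "a = l"; cases "b = l") (auto simp: add_mset_commute)
qed

lemma euler_components_of_l: "monomial_field j {#l,j#} \<in> Lie G"
proof -
  have sum: "(\<lambda>x. monomial_field l {#l,l#} x + (\<Sum>j\<in>UNIV-{l}. monomial_field j {#l,j#} x)) \<in> Lie G"
    using euler_fields[of l] euler_field_split[of l] by simp
  have differences: "(\<lambda>x. 2 *\<^sub>R monomial_field j {#l,j#} x - 1 *\<^sub>R monomial_field l {#l,l#} x) \<in> Lie G"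
    if "j \<in> UNIV - {l}" for j
    using Lie.bracket[OF off_diagonal_linear[of l j] square_of_l[of j]] that
    by (simp add: lie_bracket_monomial_fields add_mset_commute)
  show ?thesis
    using Lie_sum_components[OF _ sum differences] by (cases "j = l") auto
qed

lemma euler_components: "monomial_field j {#k,j#} \<in> Lie G"
proof (cases "k = l")
  case True
  then show ?thesis using euler_components_of_l by simp
next
  case False
  have sum: "(\<lambda>x. monomial_field k {#k,k#} x + (\<Sum>j\<in>UNIV-{k}. monomial_field j {#k,j#} x)) \<in> Lie G"
    using euler_fields[of k] euler_field_split[of k] by simp
  have differences: "(\<lambda>x. 2 *\<^sub>R monomial_field j {#k,j#} x
      - (if j = l then 2 else 1) *\<^sub>R monomial_field k {#k,k#} x) \<in> Lie G"
    if "j \<in> UNIV - {k}" for j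
  proof (cases "j = l")
    case True
    \<comment> \<open>(x^k)^2 e_l is not available yet, so this relation comes from a different bracket.\<close>
    have "lie_bracket (monomial_field l {#k#}) (monomial_field k {#l,k#}) =
        (\<lambda>x. (-1/2) *\<^sub>R (2 *\<^sub>R monomial_field l {#k,l#} x - 2 *\<^sub>R monomial_field k {#k,k#} x))"
      using False by (simp add: lie_bracket_monomial_fields fun_eq_iff algebra_simps add_mset_commute)
    from Lie_bracket_cancel[OF off_diagonal_linear euler_components_of_l this] False True
    show ?thesis by simp
  next
    case False
    then show ?thesis
      using Lie.bracket[OF off_diagonal_linear[of k j] quadratic_not_l[of j k k]] that
      by (simp add: lie_bracket_monomial_fields add_mset_commute)
  qed
  show ?thesis
    using Lie_sum_components[OF _ sum differences] by (cases "j = k") auto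
qed

lemma quadratic_l:
  assumes "a \<noteq> l" and "b \<noteq> l"
  shows "monomial_field l {#a,b#} \<in> Lie G"
  by (rule Lie_bracket_cancel[OF off_diagonal_linear[of l a] euler_components[of l b], where c=1])
     (use assms in \<open>auto simp: lie_bracket_monomial_fields fun_eq_iff add_mset_commute\<close>)

lemma diagonal_linear: "monomial_field p {#p#} \<in> Lie G"
proof -
  obtain q where "q \<noteq> p" using f_ne_l by metis
  show ?thesis
    by (rule Lie_bracket_cancel[OF constant_fields[of q] euler_components[of p q], where c=1])
       (use \<open>q \<noteq> p\<close> in \<open>auto simp: lie_bracket_monomial_fields fun_eq_iff\<close>)
qed

lemma quadratic_monomial_fields:
  assumes "size M \<le> 2"
  shows "monomial_field a M \<in> Lie G"
  using assms
proof (cases rule: multiset_size_le_2_cases)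
  case 1
  then show ?thesis using constant_fields by simp
next
  case (2 p)
  then show ?thesis using off_diagonal_linear diagonal_linear by (cases "a = p") auto
next
  case (3 p q)
  then show ?thesis
    using euler_components[of a q] euler_components[of a p] quadratic_l quadratic_not_l
    by (cases "a = p"; cases "a = q"; cases "a = l") (auto simp: add_mset_commute)
qed

end

section \<open>Polynomial vector fields\<close>

definition monomial_sum :: "(real \<times> 'n::finite multiset) list \<Rightarrow> real^'n \<Rightarrow> real" where
  "monomial_sum ps x = (\<Sum>(c,M)\<leftarrow>ps. c * monomial M x)"

lemma monomial_sum_Nil [simp]: "monomial_sum [] x = 0"
  by (simp add: monomial_sum_def)

lemma monomial_sum_Cons [simp]: "monomial_sum ((c,M) # ps) x = c * monomial M x + monomial_sum ps x"
  by (simp add: monomial_sum_def)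

lemma monomial_sum_append [simp]: "monomial_sum (ps @ qs) x = monomial_sum ps x + monomial_sum qs x"
  by (simp add: monomial_sum_def)

lemma monomial_sum_mult:
  "monomial_sum ps x * monomial_sum qs x =
    monomial_sum (concat (map (\<lambda>(c,M). map (\<lambda>(d,N). (c * d, M + N)) qs) ps)) x"
proof (induction ps)
  case Nil
  then show ?case by simp
next
  case (Cons p ps)
  have "c * monomial M x * monomial_sum qs x = monomial_sum (map (\<lambda>(d,N). (c * d, M + N)) qs) x"
    for c M by (induction qs) (auto simp: monomial_plus algebra_simps)
  with Cons show ?case by (cases p) (simp add: distrib_right)
qed

lemma poly_fun_monomial_sum: "poly_fun p \<Longrightarrow> \<exists>ps. p = monomial_sum ps"
proof (induction rule: poly_fun.induct)
  case (const c)
  have "(\<lambda>x. c) = monomial_sum [(c, {#})]" by (simp add: fun_eq_iff)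
  then show ?case by blast
next
  case (coord i)
  have "(\<lambda>x. x $ i) = monomial_sum [(1, {#i#})]" by (simp add: fun_eq_iff)
  then show ?case by blast
next
  case (add p q)
  then obtain ps qs where "p = monomial_sum ps" "q = monomial_sum qs" by blast
  then have "(\<lambda>x. p x + q x) = monomial_sum (ps @ qs)" by (simp add: fun_eq_iff)
  then show ?case by blast
next
  case (mult p q)
  then obtain ps qs where "p = monomial_sum ps" "q = monomial_sum qs" by blast
  then show ?case by (auto simp: fun_eq_iff monomial_sum_mult)
qed

lemma Lie_axis_monomial_sum:
  assumes "\<And>M. monomial_field a M \<in> Lie G"
  shows "(\<lambda>x. axis a (monomial_sum ps x)) \<in> Lie G"
proof (induction ps)
  case Nil
  then show ?case using Lie.zero[of G] by (simp add: axis_def zero_vec_def)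
next
  case (Cons p ps)
  obtain c M where p: "p = (c, M)" by fastforce
  have "(\<lambda>x. c *\<^sub>R monomial_field a M x + axis a (monomial_sum ps x)) \<in> Lie G"
    using Cons assms by (intro Lie.add Lie.scale)
  moreover have "(\<lambda>x. c *\<^sub>R monomial_field a M x + axis a (monomial_sum ps x)) =
      (\<lambda>x. axis a (monomial_sum (p # ps) x))"
    by (simp add: p fun_eq_iff monomial_field_def vec_eq_iff axis_def)
  ultimately show ?case by simp
qed

lemma sum_axis_components: "(\<Sum>i\<in>UNIV. axis i (x $ i)) = (x::real^'n::finite)"
proof -
  have "(\<Sum>i\<in>UNIV. axis i (x $ i)) $ j = (\<Sum>i\<in>UNIV. if i = j then x $ i else 0)" for j
    unfolding sum_component by (rule sum.cong) (auto simp: axis_def)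
  then show ?thesis by (simp add: vec_eq_iff)
qed

lemma Lie_poly_vfield:
  assumes "\<And>a M. monomial_field a M \<in> Lie G" and "poly_vfield V"
  shows "V \<in> Lie G"
proof -
  have "(\<lambda>x. axis i (V x $ i)) \<in> Lie G" for i
  proof -
    obtain ps where "(\<lambda>x. V x $ i) = monomial_sum ps"
      using assms(2) poly_fun_monomial_sum unfolding poly_vfield_def by blast
    with Lie_axis_monomial_sum[OF assms(1)] show ?thesis by metis
  qed
  then have "(\<lambda>x. \<Sum>i\<in>UNIV. axis i (V x $ i)) \<in> Lie G" by (intro Lie_sum) auto
  then show ?thesis by (simp add: sum_axis_components)
qed

section \<open>The shift matrix\<close>

definition immediate_pred :: "'a::linorder \<Rightarrow> 'a \<Rightarrow> bool" where
  "immediate_pred i j \<longleftrightarrow> i < j \<and> (\<forall>k. i < k \<longrightarrow> j \<le> k)"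

lemma immediate_pred_unique: "immediate_pred i j \<Longrightarrow> immediate_pred i' j \<Longrightarrow> i = i'"
  unfolding immediate_pred_def by (metis linorder_neqE not_le)

lemma immediate_pred_induct [case_names Max pred]:
  fixes i :: "'a::{finite,linorder}"
  assumes "P (Max UNIV)" and "\<And>i j. immediate_pred i j \<Longrightarrow> P j \<Longrightarrow> P i"
  shows "P i"
proof (rule ccontr)
  assume "\<not> P i"
  define m where "m = Max {k. \<not> P k}"
  have "\<not> P m" and above_m: "\<And>k. \<not> P k \<Longrightarrow> k \<le> m"
    using Max_in[of "{k. \<not> P k}"] \<open>\<not> P i\<close> by (auto simp: m_def)
  then have "m < Max UNIV"
    using assms(1) by (metis Max_ge UNIV_I finite order.not_eq_order_implies_strict)
  define j where "j = Min {k. m < k}"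
  have "{k. m < k} \<noteq> {}"
    using \<open>m < Max UNIV\<close> by blast
  then have "immediate_pred m j"
    using Min_in[of "{k. m < k}"] by (auto simp: immediate_pred_def j_def)
  moreover have "P j"
    using above_m \<open>immediate_pred m j\<close> by (meson immediate_pred_def not_le)
  ultimately show False
    using assms(2) \<open>\<not> P m\<close> by blast
qed

definition shift_matrix :: "real^'n::{finite,linorder}^'n::{finite,linorder}" where
  "shift_matrix = (\<chi> i j. if immediate_pred i j then 1 else 0)"

lemma trace_transpose: "trace (transpose A) = trace A"
  by (simp add: trace_def transpose_def)

lemma trace_shift_matrix: "trace shift_matrix = 0"
  by (simp add: trace_def shift_matrix_def immediate_pred_def)

lemma shift_matrix_axis: "immediate_pred i j \<Longrightarrow> shift_matrix *v axis j 1 = axis i 1"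
  unfolding matrix_vector_mult_basis
  by (auto simp: column_def shift_matrix_def vec_eq_iff axis_def dest: immediate_pred_unique)

lemma transpose_shift_matrix_component:
  assumes "immediate_pred i j"
  shows "(transpose shift_matrix *v x) $ j = x $ i"
proof -
  have "(transpose shift_matrix *v x) $ j = (\<Sum>k\<in>UNIV. (if immediate_pred k j then 1 else 0) * x $ k)"
    by (simp add: matrix_vector_mult_def transpose_def shift_matrix_def del: transpose_matrix_vector)
  also have "\<dots> = (\<Sum>k\<in>UNIV. if k = i then x $ k else 0)"
    using assms immediate_pred_unique by (intro sum.cong) auto
  finally show ?thesis by simp
qed

lemma has_derivative_matrix_vector_mult: "((\<lambda>x. A *v x) has_derivative (\<lambda>h. A *v h)) F"
  for A :: "real^'n::finite^'m::finite"
  by (rule bounded_linear_imp_has_derivative) (rule matrix_vector_mul_bounded_linear)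

lemma lie_bracket_linear_constant:
  "lie_bracket (\<lambda>x. A *v x) (\<lambda>x. c) = (\<lambda>x. - (A *v c))"
  by (subst lie_bracket_eq[OF has_derivative_matrix_vector_mult has_derivative_const]) simp

lemma lie_bracket_linear_euler_field:
  "lie_bracket (\<lambda>x. A *v x) (\<lambda>x. x$p *\<^sub>R x) = (\<lambda>x. (A *v x)$p *\<^sub>R x)"
proof -
  have "A *v (c *\<^sub>R x) = c *\<^sub>R (A *v x)" for c x
    by (simp add: vec_eq_iff matrix_vector_mult_def sum_distrib_left mult.left_commute)
  then show ?thesis
    by (subst lie_bracket_eq[OF has_derivative_matrix_vector_mult has_derivative_euler_field]) simp
qed

lemma Lie_constant_fields_from_shift:
  assumes "(\<lambda>x. shift_matrix *v x) \<in> Lie G" and "(\<lambda>x. axis last_idx 1) \<in> Lie G"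
  shows "(\<lambda>x. axis i 1) \<in> Lie G"
proof (induction i rule: immediate_pred_induct)
  case Max
  then show ?case using assms(2) by (simp add: last_idx_def)
next
  case (pred i j)
  have "lie_bracket (\<lambda>x. shift_matrix *v x) (\<lambda>x. axis j 1) = (\<lambda>x. (-1) *\<^sub>R axis i 1)"
    by (simp add: lie_bracket_linear_constant shift_matrix_axis[OF pred(1)])
  from Lie_bracket_cancel[OF assms(1) pred(2) this] show ?case by simp
qed

lemma Lie_euler_fields_from_shift:
  assumes "(\<lambda>x. transpose shift_matrix *v x) \<in> Lie G" and "(\<lambda>x. x$last_idx *\<^sub>R x) \<in> Lie G"
  shows "(\<lambda>x. x$p *\<^sub>R x) \<in> Lie G"
proof (induction p rule: immediate_pred_induct)
  case Max
  then show ?case using assms(2) by (simp add: last_idx_def)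
next
  case (pred i j)
  have "lie_bracket (\<lambda>x. transpose shift_matrix *v x) (\<lambda>x. x$j *\<^sub>R x) = (\<lambda>x. x$i *\<^sub>R x)"
    by (simp add: lie_bracket_linear_euler_field transpose_shift_matrix_component[OF pred(1)]
        del: transpose_matrix_vector)
  with Lie.bracket[OF assms(1) pred(2)] show ?case by simp
qed

lemma first_idx_ne_last_idx:
  assumes "CARD('n::{finite,linorder}) \<ge> 2"
  shows "first_idx \<noteq> (last_idx::'n)"
proof
  assume "first_idx = (last_idx::'n)"
  then have "i = first_idx" for i :: 'n
    unfolding first_idx_def last_idx_def by (metis Max_ge Min_le UNIV_I finite order.antisym)
  then have UNIV_eq: "UNIV = {first_idx::'n}" by auto
  show False using assms unfolding UNIV_eq by simp
qed

theorem proposition2: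
  assumes "CARD('n::{finite,linorder}) \<ge> 2"
  shows "\<exists>A B :: real^'n::{finite,linorder}^'n::{finite,linorder}. trace A = 0 \<and> trace B = 0 \<and>
    {V. poly_vfield V} \<subseteq>
      Lie {(\<lambda>x. A *v x),
           (\<lambda>x. B *v x),
           (\<lambda>x. axis last_idx 1),
           (\<lambda>x. axis first_idx ((x $ last_idx)^2)),
           (\<lambda>x. (x $ last_idx) *\<^sub>R x)}"
proof (intro exI conjI)
  let ?A = "shift_matrix :: real^'n::{finite,linorder}^'n::{finite,linorder}"
  let ?B = "transpose ?A"
  let ?G = "{(\<lambda>x. ?A *v x), (\<lambda>x. ?B *v x), (\<lambda>x. axis last_idx 1),
    (\<lambda>x. axis first_idx ((x $ last_idx)^2)), (\<lambda>x. (x $ last_idx) *\<^sub>R x)}"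
  interpret quadratic_generation ?G first_idx last_idx
  proof
    show "first_idx \<noteq> (last_idx::'n)"
      using first_idx_ne_last_idx[OF assms] .
    show "monomial_field i {#} \<in> Lie ?G" for i
      unfolding monomial_field_empty
      by (rule Lie_constant_fields_from_shift) (simp_all add: Lie.gen)
    show "(\<lambda>x. x$p *\<^sub>R x) \<in> Lie ?G" for p
      by (rule Lie_euler_fields_from_shift) (simp_all add: Lie.gen)
    show "monomial_field first_idx {#last_idx,last_idx#} \<in> Lie ?G"
      by (simp add: monomial_field_def power2_eq_square Lie.gen)
  qed
  have "monomial_field a M \<in> Lie ?G" for a M
    using Lie_monomial_fields_from_quadratic[OF assms quadratic_monomial_fields] .
  then show "{V. poly_vfield V} \<subseteq> Lie ?G"
    using Lie_poly_vfield by blast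
  show "trace ?A = 0" "trace ?B = 0"
    by (simp_all add: trace_transpose trace_shift_matrix)
qed

end
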